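(* Let $(G,v)$ be a Hamel space over an ordered field $C$. Then $v(G\setminus\{0\})$ is a $C$-linearly independent subset of $G$.
   Context: Let $C$ be an ordered field. A $2$-ordered $C$-vector space is a $C$-vector space $G$ with two total orderings $<_0,<_1$ such that $G$ is an ordered $C$-vector space with respect to each. Put $G_\infty=G\cup\{\infty\}$, with $G<_0\infty$, $G<_1\infty$. A Hamel valuation on $G$ is a map $v:G\to G_\infty$ such that for all $x,y\in G$ and $\lambda\in C^{\times}$: $v(x)=\infty$ iff $x=0$; $v(x+y)\ge_0\min_0(v(x),v(y))$; $v(\lambda x)=v(x)$; if $0<_1x<_1y$ then $v(x)\ge_0v(y)$; $v(v(x))=v(x)$ (with $v(\infty)=\infty$); and $v(x)>_10$. A Hamel space is such a pair $(G,v)$. *)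

theory Defs
  imports Main "HOL.Vector_Spaces"
begin

definition total_order_rel :: "('g \<Rightarrow> 'g \<Rightarrow> bool) \<Rightarrow> bool" where
  "total_order_rel le \<longleftrightarrow>
     (\<forall>x. le x x) \<and> (\<forall>x y. le x y \<and> le y x \<longrightarrow> x = y) \<and>
     (\<forall>x y z. le x y \<and> le y z \<longrightarrow> le x z) \<and> (\<forall>x y. le x y \<or> le y x)"

definition ordered_vs ::
  "('c::linordered_field \<Rightarrow> 'g::ab_group_add \<Rightarrow> 'g) \<Rightarrow> ('g \<Rightarrow> 'g \<Rightarrow> bool) \<Rightarrow> bool" where
  "ordered_vs scale le \<longleftrightarrow> vector_space scale \<and> total_order_rel le \<and>
     (\<forall>x y z. le x y \<longrightarrow> le (x + z) (y + z)) \<and>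
     (\<forall>c x y. 0 < c \<and> le x y \<longrightarrow> le (scale c x) (scale c y))"

definition two_ordered_vs ::
  "('c::linordered_field \<Rightarrow> 'g::ab_group_add \<Rightarrow> 'g) \<Rightarrow> ('g \<Rightarrow> 'g \<Rightarrow> bool) \<Rightarrow> ('g \<Rightarrow> 'g \<Rightarrow> bool) \<Rightarrow> bool" where
  "two_ordered_vs scale le0 le1 \<longleftrightarrow> ordered_vs scale le0 \<and> ordered_vs scale le1"

text \<open>G_infinity = 'g option, with None playing the role of infinity (the top element).\<close>
definition ext_le :: "('g \<Rightarrow> 'g \<Rightarrow> bool) \<Rightarrow> 'g option \<Rightarrow> 'g option \<Rightarrow> bool" where
  "ext_le le a b = (case b of None \<Rightarrow> True
                    | Some y \<Rightarrow> (case a of None \<Rightarrow> False | Some x \<Rightarrow> le x y))"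

definition ext_lt :: "('g \<Rightarrow> 'g \<Rightarrow> bool) \<Rightarrow> 'g option \<Rightarrow> 'g option \<Rightarrow> bool" where
  "ext_lt le a b \<longleftrightarrow> ext_le le a b \<and> a \<noteq> b"

definition ext_min :: "('g \<Rightarrow> 'g \<Rightarrow> bool) \<Rightarrow> 'g option \<Rightarrow> 'g option \<Rightarrow> 'g option" where
  "ext_min le a b = (if ext_le le a b then a else b)"

definition ext_v :: "('g \<Rightarrow> 'g option) \<Rightarrow> 'g option \<Rightarrow> 'g option" where
  "ext_v v a = (case a of None \<Rightarrow> None | Some g \<Rightarrow> v g)"

definition hamel_valuation ::
  "('c::linordered_field \<Rightarrow> 'g::ab_group_add \<Rightarrow> 'g) \<Rightarrow> ('g \<Rightarrow> 'g \<Rightarrow> bool) \<Rightarrow> ('g \<Rightarrow> 'g \<Rightarrow> bool)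
     \<Rightarrow> ('g \<Rightarrow> 'g option) \<Rightarrow> bool" where
  "hamel_valuation scale le0 le1 v \<longleftrightarrow>
     (\<forall>x. v x = None \<longleftrightarrow> x = 0) \<and>
     (\<forall>x y. ext_le le0 (ext_min le0 (v x) (v y)) (v (x + y))) \<and>
     (\<forall>c x. c \<noteq> 0 \<longrightarrow> v (scale c x) = v x) \<and>
     (\<forall>x y. le1 0 x \<and> x \<noteq> 0 \<and> le1 x y \<and> x \<noteq> y \<longrightarrow> ext_le le0 (v y) (v x)) \<and>
     (\<forall>x. ext_v v (v x) = v x) \<and>
     (\<forall>x. ext_lt le1 (Some 0) (v x))"

definition hamel_space ::
  "('c::linordered_field \<Rightarrow> 'g::ab_group_add \<Rightarrow> 'g) \<Rightarrow> ('g \<Rightarrow> 'g \<Rightarrow> bool) \<Rightarrow> ('g \<Rightarrow> 'g \<Rightarrow> bool)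
     \<Rightarrow> ('g \<Rightarrow> 'g option) \<Rightarrow> bool" where
  "hamel_space scale le0 le1 v \<longleftrightarrow> two_ordered_vs scale le0 le1 \<and> hamel_valuation scale le0 le1 v"

end

theory Submission
  imports Defs
begin

text \<open>Each value g = v x is a fixed point of v, and v is invariant under nonzero scaling, so in a
  linear combination of distinct values with nonzero coefficients the summands have pairwise
  distinct valuations. For valuations the ultrametric inequality is an equality when the two
  valuations differ, hence the valuation of the combination is the least value (for le0) occurring
  in it; in particular the combination is nonzero.\<close>

locale hamel_valued_space = vector_space scale
  for scale :: "'c::linordered_field \<Rightarrow> 'g::ab_group_add \<Rightarrow> 'g" +
  fixes le0 le1 :: "'g \<Rightarrow> 'g \<Rightarrow> bool"
    and v :: "'g \<Rightarrow> 'g option"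
  assumes total_order_le0: "total_order_rel le0"
    and hamel_valuation: "hamel_valuation scale le0 le1 v"
begin

lemma le0_refl: "le0 x x"
  using total_order_le0 unfolding total_order_rel_def by blast

lemma le0_antisym: "le0 x y \<Longrightarrow> le0 y x \<Longrightarrow> x = y"
  using total_order_le0 unfolding total_order_rel_def by blast

lemma le0_trans: "le0 x y \<Longrightarrow> le0 y z \<Longrightarrow> le0 x z"
  using total_order_le0 unfolding total_order_rel_def by blast

lemma le0_linear: "le0 x y \<or> le0 y x"
  using total_order_le0 unfolding total_order_rel_def by blast

lemma v_eq_None_iff: "v x = None \<longleftrightarrow> x = 0"
  using hamel_valuation unfolding hamel_valuation_def by auto

lemma v_add_ge_min: "ext_le le0 (ext_min le0 (v x) (v y)) (v (x + y))"
  using hamel_valuation unfolding hamel_valuation_def by auto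

lemma v_scale: "c \<noteq> 0 \<Longrightarrow> v (scale c x) = v x"
  using hamel_valuation unfolding hamel_valuation_def by auto

lemma v_uminus: "v (- x) = v x"
  using v_scale[of "-1" x] by simp

lemma v_value_fixed: "v x = Some g \<Longrightarrow> v g = Some g"
  using hamel_valuation unfolding hamel_valuation_def ext_v_def by (metis option.simps(5))

lemma v_add_eq_left:
  assumes va: "v a = Some p" and vb: "v b = Some q" and "le0 p q" "p \<noteq> q"
  shows "v (a + b) = Some p"
proof (cases "v (a + b)")
  case None
  then have "a = - b"
    by (simp add: v_eq_None_iff eq_neg_iff_add_eq_0)
  with va vb v_uminus[of b] \<open>p \<noteq> q\<close> show ?thesis by simp
next
  case (Some r)
  have "le0 p r"
    using v_add_ge_min[of a b] va vb Some \<open>le0 p q\<close> by (simp add: ext_min_def ext_le_def)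
  \<comment> \<open>Conversely, from a = (a + b) + (- b) the value p is at least min(r, q), and p \<noteq> q.\<close>
  moreover have "ext_le le0 (ext_min le0 (Some r) (Some q)) (Some p)"
    using v_add_ge_min[of "a + b" "- b"] Some va vb v_uminus[of b] by simp
  then have "le0 r p"
    using \<open>le0 p q\<close> \<open>p \<noteq> q\<close> le0_antisym by (auto simp: ext_min_def ext_le_def split: if_splits)
  ultimately show ?thesis
    using Some le0_antisym by simp
qed

lemma v_sum_fixed_points_eq_min:
  assumes "finite T" "T \<noteq> {}"
    and fixed: "\<And>g. g \<in> T \<Longrightarrow> v g = Some g"
    and nonzero: "\<And>g. g \<in> T \<Longrightarrow> u g \<noteq> 0"
  shows "\<exists>g\<in>T. v (\<Sum>w\<in>T. scale (u w) w) = Some g \<and> (\<forall>h\<in>T. le0 g h)"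
  using assms(1,2) fixed nonzero
proof (induction T rule: finite_ne_induct)
  case (singleton x)
  then show ?case
    using v_scale[of "u x" x] le0_refl by simp
next
  case (insert x F)
  then obtain g where g: "g \<in> F" "v (\<Sum>w\<in>F. scale (u w) w) = Some g" "\<forall>h\<in>F. le0 g h"
    by auto
  have vx: "v (scale (u x) x) = Some x"
    using insert.prems v_scale[of "u x" x] by simp
  have "x \<noteq> g"
    using insert.hyps g(1) by auto
  have sum: "(\<Sum>w\<in>insert x F. scale (u w) w) = scale (u x) x + (\<Sum>w\<in>F. scale (u w) w)"
    using insert.hyps by simp
  show ?case
  proof (cases "le0 x g")
    case True
    then show ?thesis
      using v_add_eq_left[OF vx g(2) True \<open>x \<noteq> g\<close>] sum g(3) le0_refl le0_trans by auto
  next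
    case False
    then have "le0 g x"
      using le0_linear by blast
    then show ?thesis
      using v_add_eq_left[OF g(2) vx _ \<open>x \<noteq> g\<close>[symmetric]] sum g by (auto simp: add.commute)
  qed
qed

lemma independent_fixed_points: "independent {g. v g = Some g}"
proof
  assume "dependent {g. v g = Some g}"
  then obtain u where "finite {g. u g \<noteq> 0}" "{g. u g \<noteq> 0} \<subseteq> {g. v g = Some g}"
    and sum: "(\<Sum>g | u g \<noteq> 0. scale (u g) g) = 0" and "\<exists>g. u g \<noteq> 0"
    unfolding dependent_alt by blast
  then obtain g where "v (\<Sum>g | u g \<noteq> 0. scale (u g) g) = Some g"
    using v_sum_fixed_points_eq_min[of "{g. u g \<noteq> 0}" u] by blast
  with sum v_eq_None_iff[of 0] show False by simp
qed

end

lemma hamel_space_imp_hamel_valued_space: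
  "hamel_space scale le0 le1 v \<Longrightarrow> hamel_valued_space scale le0 le1 v"
  unfolding hamel_space_def two_ordered_vs_def ordered_vs_def hamel_valued_space_def
    hamel_valued_space_axioms_def
  by blast

theorem lemma4p3:
  fixes scale :: "'c::linordered_field \<Rightarrow> 'g::ab_group_add \<Rightarrow> 'g"
    and le0 le1 :: "'g \<Rightarrow> 'g \<Rightarrow> bool"
    and v :: "'g \<Rightarrow> 'g option"
  assumes "hamel_space scale le0 le1 v"
  shows "\<not> module.dependent scale {g. \<exists>x. x \<noteq> 0 \<and> v x = Some g}"
proof -
  interpret hamel_valued_space scale le0 le1 v
    using assms by (rule hamel_space_imp_hamel_valued_space)
  have "{g. \<exists>x. x \<noteq> 0 \<and> v x = Some g} \<subseteq> {g. v g = Some g}"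
    using v_value_fixed by blast
  then show ?thesis
    using independent_fixed_points independent_mono by blast
qed

end
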